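(* For every integer $b\ge0$, the number $jp_b(1)$ of multiplex juggling patterns with exactly $b$ balls and minimal period $1$ equals $p(b)$, the number of (unordered) partitions of $b$.
   Context: A multiplex siteswap of length $n$ is a sequence $(M_0,\ldots,M_{n-1})$, indexed by $t\in\mathbb{Z}/n\mathbb{Z}$, of finite multisets of positive integers (empty means no throw) such that for every $t$, $|M_t|$ equals the number of pairs $(s,h)$ with $h$ an element of $M_s$ (with multiplicity) and $s+h\equiv t\pmod n$; its number of balls is $\frac1n\sum_t\sum_{h\in M_t}h$. Its minimal period is the least $d\ge1$ with $M_{t+d}=M_t$ for all $t$. A multiplex juggling pattern with $b$ balls and minimal period $n$ is an orbit, under cyclic rotation, of multiplex siteswaps of length $n$ with $b$ balls and minimal period $n$. $p(0)=1$. *)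

theory Defs
  imports Main "HOL-Library.Multiset"
begin

text \<open>A multiplex siteswap of length n: a list of n multisets of positive integers
  (index t stands for t in Z/nZ), with the landing condition.\<close>
definition is_mss :: "nat \<Rightarrow> nat multiset list \<Rightarrow> bool" where
  "is_mss n L \<longleftrightarrow> length L = n \<and>
     (\<forall>t<n. \<forall>h\<in>#L!t. h > 0) \<and>
     (\<forall>t<n. size (L!t) = (\<Sum>s<n. size (filter_mset (\<lambda>h. (s + h) mod n = t) (L!s))))"

text \<open>Number of balls is b, i.e. (1/n) * total sum of throws = b.\<close>
definition has_balls :: "nat \<Rightarrow> nat \<Rightarrow> nat multiset list \<Rightarrow> bool" where
  "has_balls n b L \<longleftrightarrow> (\<Sum>t<n. sum_mset (L!t)) = b * n"

definition min_period :: "nat multiset list \<Rightarrow> nat" where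
  "min_period L = (LEAST d. d \<ge> 1 \<and> (\<forall>t<length L. L!((t + d) mod length L) = L!t))"

definition jp :: "nat \<Rightarrow> nat \<Rightarrow> nat" where
  "jp b n = card {{rotate k L | k. True} | L. is_mss n L \<and> has_balls n b L \<and> min_period L = n}"

definition npart :: "nat \<Rightarrow> nat" where
  "npart b = card {M :: nat multiset. (\<forall>x\<in>#M. x > 0) \<and> sum_mset M = b}"

end

theory Submission
  imports Defs
begin

text \<open>A siteswap of length 1 is a single multiset of positive throws: every throw lands
  back at time 0, so the landing condition holds automatically, and the ball count is the
  sum of the throws. Rotation orbits of one-element lists are singletons, so patterns of
  period 1 correspond bijectively to partitions.\<close>

lemma rotate_orbit_singleton: "{rotate k [x] | k. True} = {[x]}"
  by auto

lemma min_period_singleton: "min_period [M] = 1"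
  unfolding min_period_def by (rule Least_equality) auto

lemma is_mss_1_iff: "is_mss 1 L \<longleftrightarrow> (\<exists>M. L = [M] \<and> (\<forall>h\<in>#M. h > 0))"
proof
  assume "is_mss 1 L"
  then have "length L = 1" and "\<forall>h\<in>#L!0. h > 0"
    by (auto simp: is_mss_def)
  then show "\<exists>M. L = [M] \<and> (\<forall>h\<in>#M. h > 0)"
    by (cases L) auto
qed (auto simp: is_mss_def)

lemma has_balls_singleton: "has_balls 1 b [M] \<longleftrightarrow> sum_mset M = b"
  by (simp add: has_balls_def)

lemma period_one_siteswap_iff:
  "is_mss 1 L \<and> has_balls 1 b L \<and> min_period L = 1 \<longleftrightarrow>
     (\<exists>M. L = [M] \<and> (\<forall>x\<in>#M. x > 0) \<and> sum_mset M = b)"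
  by (auto simp only: is_mss_1_iff has_balls_singleton min_period_singleton)

lemma period_one_patterns:
  "{{rotate k L | k. True} | L. is_mss 1 L \<and> has_balls 1 b L \<and> min_period L = 1}
     = (\<lambda>M. {[M]}) ` {M. (\<forall>x\<in>#M. x > 0) \<and> sum_mset M = b}"
  unfolding period_one_siteswap_iff
  by (auto simp only: rotate_orbit_singleton image_iff mem_Collect_eq)
    (metis rotate_orbit_singleton)

theorem theorem9:
  fixes b :: nat
  shows "jp b 1 = npart b"
proof -
  have "inj (\<lambda>M :: nat multiset. {[M]})"
    by (auto intro: injI)
  then show ?thesis
    unfolding jp_def npart_def period_one_patterns
    by (auto intro: card_image inj_on_subset)
qed

end
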